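(* Let $k$ be an odd positive integer and let $\zeta$ be a primitive $2k$-th root of unity. Let $Q_k$ denote the set of quasipolarities of $\mathbb{Z}/2k\mathbb{Z}$. Then \[ \sum_{\pi\in Q_{k}}\prod_{j=0}^{2k-1}\frac{1+\zeta^{j-\pi(j)}}{1-\zeta^{j-\pi(j)}} = 0. \]
   Context: The affine general linear group $\overrightarrow{GL}(\mathbb{Z}/2k\mathbb{Z})$ consists of the maps $e^{u}.v:\mathbb{Z}/2k\mathbb{Z}\to\mathbb{Z}/2k\mathbb{Z}$, $x\mapsto vx+u$, with $u\in\mathbb{Z}/2k\mathbb{Z}$ and $v\in(\mathbb{Z}/2k\mathbb{Z})^{\times}$. A quasipolarity is an element $\pi$ of this group that is an involution ($\pi\circ\pi=\mathrm{id}$) and a derangement ($\pi(x)\neq x$ for all $x$). Elements $j\in\{0,\dots,2k-1\}$ are identified with residues mod $2k$; the exponent $j-\pi(j)$ is taken mod $2k$ (well defined since $\zeta^{2k}=1$), and denominators are nonzero because $\pi$ is a derangement. *)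

theory Defs
  imports Complex_Main
begin

text \<open>Elements of Z/nZ are represented by the naturals 0..<n. The affine map
  e^u.v : x \<mapsto> v x + u (mod n), with u a residue and v a unit.\<close>

definition affine_map :: "nat \<Rightarrow> nat \<Rightarrow> nat \<Rightarrow> (nat \<Rightarrow> nat)" where
  "affine_map n u v = (\<lambda>x. (v * x + u) mod n)"

definition affine_group :: "nat \<Rightarrow> (nat \<Rightarrow> nat) set" where
  "affine_group n = {affine_map n u v | u v. u < n \<and> v < n \<and> coprime v n}"

definition quasipolarities :: "nat \<Rightarrow> (nat \<Rightarrow> nat) set" where
  "quasipolarities n = {\<pi> \<in> affine_group n.
      (\<forall>x<n. \<pi> (\<pi> x) = x) \<and> (\<forall>x<n. \<pi> x \<noteq> x)}"

definition primitive_root_unity :: "nat \<Rightarrow> complex \<Rightarrow> bool" where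
  "primitive_root_unity n z \<longleftrightarrow> z ^ n = 1 \<and> (\<forall>m. 0 < m \<and> m < n \<longrightarrow> z ^ m \<noteq> 1)"

definition pow_diff_mod :: "nat \<Rightarrow> complex \<Rightarrow> nat \<Rightarrow> nat \<Rightarrow> complex" where
  "pow_diff_mod n z a b = z ^ nat ((int a - int b) mod int n)"

end

theory Submission
  imports Defs
begin

text \<open>Let \<open>\<pi> x = v x + u\<close> be a quasipolarity of \<open>\<int>/2k\<int>\<close>, \<open>k\<close> odd. Reduced modulo the odd
  number \<open>k\<close>, \<open>\<pi>\<close> is still an affine involution, and it has the fixed point \<open>x = u/2\<close>; hence
  \<open>k\<close> divides \<open>\<pi> x - x\<close>, while \<open>2k\<close> does not because \<open>\<pi>\<close> is a derangement. So
  \<open>x - \<pi> x \<equiv> k (mod 2k)\<close>, and since \<open>\<zeta>\<^sup>k = -1\<close> the factor of index \<open>x\<close> in every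
  summand vanishes.\<close>

lemma primitive_root_unity_power_half:
  assumes "0 < k" and "primitive_root_unity (2 * k) z"
  shows "z ^ k = -1"
proof -
  have "(z ^ k - 1) * (z ^ k + 1) = 0"
    using assms(2) unfolding primitive_root_unity_def
    by (simp add: algebra_simps power_mult[symmetric] power2_eq_square[symmetric] mult.commute)
  moreover have "z ^ k \<noteq> 1"
    using assms unfolding primitive_root_unity_def by auto
  ultimately show ?thesis
    by (simp add: eq_neg_iff_add_eq_0 add.commute)
qed

lemma mod_double_eq_self_if_dvd_not_dvd:
  fixes d k :: int
  assumes "0 < k" and "k dvd d" and "\<not> 2 * k dvd d"
  shows "d mod (2 * k) = k"
proof -
  obtain t where t: "d = k * t" using assms(2) by blast
  with assms(3) have "odd t" by auto
  then obtain s where "t = 2 * s + 1" by (blast elim: oddE)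
  with t have "d = k + 2 * k * s" by (simp add: algebra_simps)
  then show ?thesis using assms(1) by simp
qed

lemma affine_involution_dvd:
  assumes "0 < n" and "u < n"
    and "\<forall>x<n. affine_map n u v (affine_map n u v x) = x"
  shows "n dvd (v + 1) * u"
proof -
  have "affine_map n u v 0 = u" using assms(2) by (simp add: affine_map_def)
  with assms have "affine_map n u v u = 0" by force
  then show ?thesis by (simp add: affine_map_def mod_eq_0_iff_dvd algebra_simps)
qed

lemma affine_involution_fixed_point_mod_odd_divisor:
  assumes "odd m" and "m dvd n" and "0 < n" and "n dvd (v + 1) * u"
  shows "\<exists>x<n. int m dvd int (affine_map n u v x) - int x"
proof -
  define h where "h = (m + 1) div 2" \<comment> \<open>the inverse of \<open>2\<close> modulo \<open>m\<close>\<close>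
  define x where "x = (u * h) mod n"
  define d where "d = int v * int x + int u - int x"
  have two_h: "int m + 1 = 2 * int h"
    using assms(1) unfolding h_def by (simp add: of_nat_div) presburger
  have "int x mod int n = (int u * int h) mod int n"
    unfolding x_def by (simp add: zmod_int)
  then obtain q where q: "int x = int u * int h + int n * q"
    by (metis mod_eq_dvd_iff dvd_def eq_diff_eq add.commute)
  have m_dvd_n: "int m dvd int n"
    using assms(2) by simp
  have "int n dvd int ((v + 1) * u)"
    using assms(4) by (simp only: of_nat_dvd_iff)
  then have "int n dvd (int v + 1) * int u" by (simp add: algebra_simps)
  with m_dvd_n have m_dvd_vu: "int m dvd (int v + 1) * int u"
    by (rule dvd_trans)
  have "2 * d = (int v - 1) * (2 * int x) + 2 * int u" unfolding d_def by (simp add: algebra_simps)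
  also have "\<dots> = (int v - 1) * int u * (int m + 1) + 2 * (int v - 1) * int n * q + 2 * int u"
    unfolding q two_h by (simp add: algebra_simps)
  also have "\<dots> = (int v + 1) * int u + int m * ((int v - 1) * int u) + int n * (2 * (int v - 1) * q)"
    by (simp add: algebra_simps)
  finally have "int m dvd 2 * d"
    using m_dvd_n m_dvd_vu by simp
  moreover have "coprime (int m) 2" using assms(1) by simp
  ultimately have "int m dvd d" by (simp add: coprime_dvd_mult_right_iff)
  moreover have "int (affine_map n u v x) mod int m = (int v * int x + int u) mod int m"
    using assms(2) by (simp add: affine_map_def zmod_int mod_mod_cancel)
  ultimately have "int m dvd int (affine_map n u v x) - int x"
    unfolding d_def by (simp add: mod_eq_dvd_iff[symmetric] mod_diff_left_eq)
  moreover have "x < n" using assms(3) unfolding x_def by simp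
  ultimately show ?thesis by blast
qed

lemma quasipolarity_ex_displacement_eq_half:
  assumes "odd k" and "\<pi> \<in> quasipolarities (2 * k)"
  shows "\<exists>j<2 * k. (int j - int (\<pi> j)) mod (2 * int k) = int k"
proof -
  obtain u v where \<pi>: "\<pi> = affine_map (2 * k) u v" and "u < 2 * k"
    and involution: "\<forall>x<2 * k. \<pi> (\<pi> x) = x" and derangement: "\<forall>x<2 * k. \<pi> x \<noteq> x"
    using assms(2) unfolding quasipolarities_def affine_group_def by blast
  have "0 < k" using assms(1) by (rule odd_pos)
  have two_k_dvd: "2 * k dvd (v + 1) * u"
    using affine_involution_dvd \<open>0 < k\<close> \<open>u < 2 * k\<close> involution unfolding \<pi> by simp
  obtain j where "j < 2 * k" and k_dvd: "int k dvd int (\<pi> j) - int j"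
    using affine_involution_fixed_point_mod_odd_divisor[OF assms(1) dvd_triv_right _ two_k_dvd] \<open>0 < k\<close>
    unfolding \<pi> by auto
  have "\<pi> j < 2 * k" using \<open>0 < k\<close> unfolding \<pi> affine_map_def by simp
  have "\<not> 2 * int k dvd int j - int (\<pi> j)"
  proof
    assume "2 * int k dvd int j - int (\<pi> j)"
    then have "int j mod (2 * int k) = int (\<pi> j) mod (2 * int k)"
      by (simp add: mod_eq_dvd_iff)
    with \<open>j < 2 * k\<close> \<open>\<pi> j < 2 * k\<close> derangement show False by auto
  qed
  moreover have "int k dvd int j - int (\<pi> j)"
    using k_dvd by (simp add: dvd_diff_commute)
  ultimately have "(int j - int (\<pi> j)) mod (2 * int k) = int k"
    using \<open>0 < k\<close> by (intro mod_double_eq_self_if_dvd_not_dvd) simp_all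
  with \<open>j < 2 * k\<close> show ?thesis by blast
qed

theorem theorem2p1:
  fixes k :: nat and \<zeta> :: complex
  assumes "odd k" and "0 < k"
    and "primitive_root_unity (2 * k) \<zeta>"
  shows "(\<Sum>\<pi>\<in>quasipolarities (2 * k).
           \<Prod>j\<in>{0..<2 * k}. (1 + pow_diff_mod (2 * k) \<zeta> j (\<pi> j))
                            / (1 - pow_diff_mod (2 * k) \<zeta> j (\<pi> j))) = 0"
proof (rule sum.neutral, rule ballI)
  fix \<pi> assume "\<pi> \<in> quasipolarities (2 * k)"
  then obtain j where "j < 2 * k" and "(int j - int (\<pi> j)) mod (2 * int k) = int k"
    using quasipolarity_ex_displacement_eq_half[OF assms(1)] by blast
  then have "pow_diff_mod (2 * k) \<zeta> j (\<pi> j) = -1"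
    unfolding pow_diff_mod_def using primitive_root_unity_power_half[OF assms(2,3)] by simp
  then have "(1 + pow_diff_mod (2 * k) \<zeta> j (\<pi> j)) / (1 - pow_diff_mod (2 * k) \<zeta> j (\<pi> j)) = 0"
    by simp
  then show "(\<Prod>j\<in>{0..<2 * k}. (1 + pow_diff_mod (2 * k) \<zeta> j (\<pi> j))
                            / (1 - pow_diff_mod (2 * k) \<zeta> j (\<pi> j))) = 0"
    using \<open>j < 2 * k\<close> by (intro prod_zero) auto
qed

end
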